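(* Let $X\in\mathbb{R}^{m\times n}$ be fixed with rows $x^\alpha$, let $W^{\mathrm{pre}},W^{\mathrm{post}}\in\mathbb{R}^{n\times n}$ have i.i.d. $\mathcal N(0,1)$ entries, and define $$\mathcal T_1^{\alpha\beta}=\frac{c\sqrt c}{n\sqrt n}\sum_{i,j}W^{\mathrm{post}}_{ji}\Big(x^\alpha_i\sigma_s\Big(\sum_{j'}x^\beta_{j'}W^{\mathrm{pre}}_{j'j}\Big)+x^\beta_i\sigma_s\Big(\sum_{j'}x^\alpha_{j'}W^{\mathrm{pre}}_{j'j}\Big)\Big),$$ $$\mathcal T_2^{\delta\omega}=\frac{c^2}{n^2\sqrt n}\sum_{i,j,j'}W^{\mathrm{post}}_{ji}W^{\mathrm{post}}_{j'i}\sigma_s\Big(\sum_kx^\delta_kW^{\mathrm{pre}}_{kj}\Big)\sigma_s\Big(\sum_{k'}x^\omega_{k'}W^{\mathrm{pre}}_{k'j'}\Big).$$ Then $\mathbb{E}[\mathcal T_1^{\alpha\beta}\mathcal T_2^{\delta\omega}]=0$ for all tokens $\alpha,\beta,\delta,\omega$, where the expectation is over the weights.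
   Context: $\sigma_s(x)=s_+\max(x,0)+s_-\min(x,0)$ with $s_\pm=1+c_\pm n^{-1/2}$ for constants $c_\pm\in\mathbb{R}$; $c^{-1}=\mathbb{E}\sigma_s(g)^2$ for $g\sim\mathcal N(0,1)$. *)

theory Defs
  imports "HOL-Probability.Probability"
begin

definition std_gauss :: "real measure" where
  "std_gauss = density lborel std_normal_density"

text \<open>Law of an n x n matrix with i.i.d. N(0,1) entries (entries indexed by (row, column)).\<close>
definition gauss_mat :: "nat \<Rightarrow> (nat \<times> nat \<Rightarrow> real) measure" where
  "gauss_mat n = PiM ({..<n} \<times> {..<n}) (\<lambda>_. std_gauss)"

definition weights :: "nat \<Rightarrow> ((nat \<times> nat \<Rightarrow> real) \<times> (nat \<times> nat \<Rightarrow> real)) measure" where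
  "weights n = gauss_mat n \<Otimes>\<^sub>M gauss_mat n"

definition s_plus :: "real \<Rightarrow> nat \<Rightarrow> real" where
  "s_plus cp n = 1 + cp / sqrt (real n)"
definition s_minus :: "real \<Rightarrow> nat \<Rightarrow> real" where
  "s_minus cm n = 1 + cm / sqrt (real n)"

definition sigma_s :: "real \<Rightarrow> real \<Rightarrow> nat \<Rightarrow> real \<Rightarrow> real" where
  "sigma_s cp cm n x = s_plus cp n * max x 0 + s_minus cm n * min x 0"

definition c_const :: "real \<Rightarrow> real \<Rightarrow> nat \<Rightarrow> real" where
  "c_const cp cm n = 1 / (\<integral>g. (sigma_s cp cm n g)\<^sup>2 \<partial>std_gauss)"

text \<open>T_1^{ab}; X a b = x^a_b (row a of X), Wpre (j',j) = W^pre_{j'j}.\<close>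
definition T1 :: "real \<Rightarrow> real \<Rightarrow> nat \<Rightarrow> (nat \<Rightarrow> nat \<Rightarrow> real) \<Rightarrow> nat \<Rightarrow> nat
    \<Rightarrow> (nat \<times> nat \<Rightarrow> real) \<Rightarrow> (nat \<times> nat \<Rightarrow> real) \<Rightarrow> real" where
  "T1 cp cm n X a b Wpre Wpost =
     (let c = c_const cp cm n in
      c * sqrt c / (real n * sqrt (real n)) *
      (\<Sum>i<n. \<Sum>j<n. Wpost (j, i) *
         (X a i * sigma_s cp cm n (\<Sum>j'<n. X b j' * Wpre (j', j))
          + X b i * sigma_s cp cm n (\<Sum>j'<n. X a j' * Wpre (j', j)))))"

definition T2 :: "real \<Rightarrow> real \<Rightarrow> nat \<Rightarrow> (nat \<Rightarrow> nat \<Rightarrow> real) \<Rightarrow> nat \<Rightarrow> nat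
    \<Rightarrow> (nat \<times> nat \<Rightarrow> real) \<Rightarrow> (nat \<times> nat \<Rightarrow> real) \<Rightarrow> real" where
  "T2 cp cm n X d w Wpre Wpost =
     (let c = c_const cp cm n in
      c\<^sup>2 / ((real n)\<^sup>2 * sqrt (real n)) *
      (\<Sum>i<n. \<Sum>j<n. \<Sum>j'<n. Wpost (j, i) * Wpost (j', i) *
         sigma_s cp cm n (\<Sum>k<n. X d k * Wpre (k, j)) *
         sigma_s cp cm n (\<Sum>k'<n. X w k' * Wpre (k', j'))))"

end

theory Submission
  imports Defs
begin

text \<open>Negating \<open>W\<^sup>p\<^sup>o\<^sup>s\<^sup>t\<close> preserves the law of the weights. Since \<open>\<T>\<^sub>1\<close> is linear and
  \<open>\<T>\<^sub>2\<close> quadratic in \<open>W\<^sup>p\<^sup>o\<^sup>s\<^sup>t\<close>, the product \<open>\<T>\<^sub>1 \<T>\<^sub>2\<close> is odd under this symmetry, so its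
  expectation vanishes. It is integrable because \<open>\<sigma>\<^sub>s\<close> grows linearly, so \<open>|\<T>\<^sub>1 \<T>\<^sub>2|\<close> is
  dominated by a multiple of the sixth power of the largest weight entry, and Gaussian
  moments are finite.\<close>

lemma prob_space_std_gauss: "prob_space std_gauss"
  unfolding std_gauss_def using prob_space_normal_density[of 1 0] by simp

lemma sets_std_gauss [measurable_cong, simp]: "sets std_gauss = sets borel"
  unfolding std_gauss_def by simp

lemma space_std_gauss [simp]: "space std_gauss = UNIV"
  unfolding std_gauss_def by simp

lemma integrable_std_gauss_abs_power: "integrable std_gauss (\<lambda>x. \<bar>x\<bar> ^ k)"
  unfolding std_gauss_def
  by (subst integrable_density) (auto simp: normal_density_nonneg integrable_std_normal_moment_abs)

lemma distr_std_gauss_uminus: "distr std_gauss std_gauss uminus = std_gauss"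
proof (rule measure_eqI)
  fix A assume "A \<in> sets (distr std_gauss std_gauss uminus)"
  then have A [measurable]: "A \<in> sets borel" by simp
  have "uminus -` A \<in> sets (borel :: real measure)"
    using measurable_sets[of uminus borel borel A] by simp
  have "emeasure (distr std_gauss std_gauss uminus) A = emeasure std_gauss (uminus -` A)"
    by (subst emeasure_distr) auto
  also have "\<dots> = (\<integral>\<^sup>+x. ennreal (std_normal_density x) * indicator (uminus -` A) x \<partial>lborel)"
    unfolding std_gauss_def using \<open>uminus -` A \<in> sets borel\<close> by (subst emeasure_density) auto
  also have "\<dots> = (\<integral>\<^sup>+x. (\<lambda>y. ennreal (std_normal_density y) * indicator A y) (- x) \<partial>lborel)"
    by (intro nn_integral_cong) (auto simp: normal_density_def indicator_def)
  also have "\<dots> = (\<integral>\<^sup>+y. ennreal (std_normal_density y) * indicator A y \<partial>distr lborel borel uminus)"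
    by (subst nn_integral_distr) auto
  also have "\<dots> = emeasure std_gauss A"
    unfolding lborel_distr_uminus std_gauss_def by (subst emeasure_density) auto
  finally show "emeasure (distr std_gauss std_gauss uminus) A = emeasure std_gauss A" .
qed simp

lemma prob_space_gauss_mat: "prob_space (gauss_mat n)"
  unfolding gauss_mat_def by (intro prob_space_PiM prob_space_std_gauss)

lemma integrable_PiM_component:
  assumes "\<And>i. i \<in> I \<Longrightarrow> prob_space (M i)" "i \<in> I"
    and "integrable (M i) (f :: _ \<Rightarrow> real)"
  shows "integrable (PiM I M) (\<lambda>x. f (x i))"
proof -
  have "integrable (distr (PiM I M) (M i) (\<lambda>x. x i)) f"
    using assms by (simp add: distr_PiM_component)
  then show ?thesis
    using assms(2,3) by (subst (asm) integrable_distr_eq) auto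
qed

lemma integrable_pair_measure_fst:
  assumes "prob_space M" "prob_space N" "integrable M (f :: _ \<Rightarrow> real)"
  shows "integrable (M \<Otimes>\<^sub>M N) (\<lambda>x. f (fst x))"
proof -
  interpret N: prob_space N by fact
  have "integrable (distr (M \<Otimes>\<^sub>M N) M fst) f"
    using assms(3) by (simp add: N.distr_pair_fst)
  then show ?thesis
    using assms(3) by (subst (asm) integrable_distr_eq) auto
qed

lemma integrable_pair_measure_snd:
  assumes "prob_space M" "prob_space N" "integrable N (f :: _ \<Rightarrow> real)"
  shows "integrable (M \<Otimes>\<^sub>M N) (\<lambda>x. f (snd x))"
proof -
  interpret M: prob_space M by fact
  interpret N: prob_space N by fact
  interpret pair_sigma_finite N M ..
  have "integrable (N \<Otimes>\<^sub>M M) (\<lambda>x. f (fst x))"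
    using assms by (intro integrable_pair_measure_fst)
  from integrable_product_swap[OF this] show ?thesis
    by (simp add: case_prod_beta')
qed

lemma distr_PiM_compose_invariant:
  assumes "finite I" "prob_space M" "g \<in> measurable M M" "distr M M g = M"
  shows "distr (PiM I (\<lambda>_. M)) (PiM I (\<lambda>_. M)) (compose I g) = PiM I (\<lambda>_. M)"
  using distr_PiM_finite_prob_space'[of I "\<lambda>_. M" "\<lambda>_. M" g] assms by simp

lemma distr_pair_measure_map_snd_invariant:
  assumes "prob_space M" "prob_space N" "g \<in> measurable N N" "distr N N g = N"
  shows "distr (M \<Otimes>\<^sub>M N) (M \<Otimes>\<^sub>M N) (\<lambda>(x, y). (x, g y)) = M \<Otimes>\<^sub>M N"
proof -
  interpret N: prob_space N by fact
  have "distr M M (\<lambda>x. x) \<Otimes>\<^sub>M distr N N g = distr (M \<Otimes>\<^sub>M N) (M \<Otimes>\<^sub>M N) (\<lambda>(x, y). (x, g y))"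
    using assms by (intro pair_measure_distr) (auto intro: N.sigma_finite_measure)
  then show ?thesis
    using assms(4) by (simp add: distr_id2)
qed

lemma integral_eq_0_if_odd:
  assumes "g \<in> measurable M M" "distr M M g = M" "(f :: _ \<Rightarrow> real) \<in> borel_measurable M"
    and "\<And>x. x \<in> space M \<Longrightarrow> f (g x) = - f x"
  shows "integral\<^sup>L M f = 0"
proof -
  have "integral\<^sup>L M f = integral\<^sup>L (distr M M g) f"
    using assms(2) by simp
  also have "\<dots> = integral\<^sup>L M (\<lambda>x. f (g x))"
    using assms(1,3) by (rule integral_distr)
  also have "\<dots> = - integral\<^sup>L M f"
    using assms(4) by (simp cong: Bochner_Integration.integral_cong)
  finally show ?thesis by simp
qed

text \<open>\<open>compose\<close> restricts to the index set, so the map stays within the extensional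
  functions that form the space of \<^const>\<open>gauss_mat\<close>.\<close>

definition negate_post ::
    "nat \<Rightarrow> (nat \<times> nat \<Rightarrow> real) \<times> (nat \<times> nat \<Rightarrow> real) \<Rightarrow> (nat \<times> nat \<Rightarrow> real) \<times> (nat \<times> nat \<Rightarrow> real)"
  where "negate_post n = (\<lambda>(Wpre, Wpost). (Wpre, compose ({..<n} \<times> {..<n}) uminus Wpost))"

lemma negate_post_measurable [measurable]: "negate_post n \<in> measurable (weights n) (weights n)"
  unfolding negate_post_def weights_def gauss_mat_def compose_def by measurable

lemma distr_weights_negate_post: "distr (weights n) (weights n) (negate_post n) = weights n"
proof -
  have "distr (gauss_mat n) (gauss_mat n) (compose ({..<n} \<times> {..<n}) uminus) = gauss_mat n"
    unfolding gauss_mat_def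
    by (intro distr_PiM_compose_invariant prob_space_std_gauss distr_std_gauss_uminus) auto
  moreover have "compose ({..<n} \<times> {..<n}) uminus \<in> measurable (gauss_mat n) (gauss_mat n)"
    unfolding gauss_mat_def compose_def by measurable
  ultimately show ?thesis
    unfolding weights_def negate_post_def
    by (intro distr_pair_measure_map_snd_invariant prob_space_gauss_mat)
qed

lemma T1_negate_post:
  "T1 cp cm n X a b Wpre (compose ({..<n} \<times> {..<n}) uminus Wpost) = - T1 cp cm n X a b Wpre Wpost"
proof -
  have "T1 cp cm n X a b Wpre (compose ({..<n} \<times> {..<n}) uminus Wpost)
      = T1 cp cm n X a b Wpre (\<lambda>e. - Wpost e)"
    unfolding T1_def Let_def
    by (intro arg_cong[where f="\<lambda>x. _ * x"] sum.cong refl) (auto simp: compose_def)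
  then show ?thesis
    by (simp add: T1_def Let_def sum_negf)
qed

lemma T2_negate_post:
  "T2 cp cm n X d w Wpre (compose ({..<n} \<times> {..<n}) uminus Wpost) = T2 cp cm n X d w Wpre Wpost"
  unfolding T2_def Let_def
  by (intro arg_cong[where f="\<lambda>x. _ * x"] sum.cong refl) (auto simp: compose_def)

lemma abs_sigma_s_le: "\<bar>sigma_s cp cm n x\<bar> \<le> (\<bar>s_plus cp n\<bar> + \<bar>s_minus cm n\<bar>) * \<bar>x\<bar>"
proof -
  have "sigma_s cp cm n x = (if 0 \<le> x then s_plus cp n else s_minus cm n) * x"
    unfolding sigma_s_def by (simp add: max_def min_def)
  then show ?thesis
    by (simp add: abs_mult mult_right_mono)
qed

lemma abs_sum_mult_le:
  fixes x W :: "'a \<Rightarrow> real"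
  assumes "\<And>k. k \<in> A \<Longrightarrow> \<bar>W k\<bar> \<le> r"
  shows "\<bar>\<Sum>k\<in>A. x k * W k\<bar> \<le> (\<Sum>k\<in>A. \<bar>x k\<bar>) * r"
proof -
  have "\<bar>\<Sum>k\<in>A. x k * W k\<bar> \<le> (\<Sum>k\<in>A. \<bar>x k\<bar> * \<bar>W k\<bar>)"
    using sum_abs[of "\<lambda>k. x k * W k" A] by (simp add: abs_mult)
  also have "\<dots> \<le> (\<Sum>k\<in>A. \<bar>x k\<bar> * r)"
    by (intro sum_mono mult_left_mono assms) auto
  finally show ?thesis by (simp add: sum_distrib_right)
qed

lemma abs_sigma_s_sum_mult_le:
  fixes x W :: "'a \<Rightarrow> real"
  assumes "\<And>k. k \<in> A \<Longrightarrow> \<bar>W k\<bar> \<le> r"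
  shows "\<bar>sigma_s cp cm n (\<Sum>k\<in>A. x k * W k)\<bar>
           \<le> (\<bar>s_plus cp n\<bar> + \<bar>s_minus cm n\<bar>) * (\<Sum>k\<in>A. \<bar>x k\<bar>) * r"
  using order_trans[OF abs_sigma_s_le mult_left_mono[OF abs_sum_mult_le[OF assms]]]
  by (simp add: mult.assoc)

definition entries_bounded :: "nat \<Rightarrow> real \<Rightarrow> (nat \<times> nat \<Rightarrow> real) \<Rightarrow> bool"
  where "entries_bounded n r W \<longleftrightarrow> (\<forall>e \<in> {..<n} \<times> {..<n}. \<bar>W e\<bar> \<le> r)"

lemma T1_entrywise_bound:
  obtains C where "\<And>Wpre Wpost r. 0 \<le> r \<Longrightarrow>
      entries_bounded n r Wpre \<Longrightarrow> entries_bounded n r Wpost \<Longrightarrow>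
      \<bar>T1 cp cm n X a b Wpre Wpost\<bar> \<le> C * r ^ 2"
proof
  define K where "K = \<bar>s_plus cp n\<bar> + \<bar>s_minus cm n\<bar>"
  define S where "S c = (\<Sum>k<n. \<bar>X c k\<bar>)" for c
  define \<kappa> where "\<kappa> = c_const cp cm n * sqrt (c_const cp cm n) / (real n * sqrt (real n))"
  fix Wpre Wpost and r :: real
  assume r: "0 \<le> r" and Wpre: "entries_bounded n r Wpre" and Wpost: "entries_bounded n r Wpost"
  have term_bound: "\<bar>Wpost (j, i) * (X a i * sigma_s cp cm n (\<Sum>k<n. X b k * Wpre (k, j))
          + X b i * sigma_s cp cm n (\<Sum>k<n. X a k * Wpre (k, j)))\<bar>
        \<le> (\<bar>X a i\<bar> * (K * S b) + \<bar>X b i\<bar> * (K * S a)) * r ^ 2"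
    if "i < n" "j < n" for i j
  proof -
    have "\<bar>sigma_s cp cm n (\<Sum>k<n. X c k * Wpre (k, j))\<bar> \<le> K * S c * r" for c
      using Wpre \<open>j < n\<close> unfolding K_def S_def entries_bounded_def
      by (intro abs_sigma_s_sum_mult_le) auto
    then have "\<bar>X a i * sigma_s cp cm n (\<Sum>k<n. X b k * Wpre (k, j))
          + X b i * sigma_s cp cm n (\<Sum>k<n. X a k * Wpre (k, j))\<bar>
        \<le> \<bar>X a i\<bar> * (K * S b * r) + \<bar>X b i\<bar> * (K * S a * r)"
        (is "\<bar>?u\<bar> \<le> ?B")
      by (intro order_trans[OF abs_triangle_ineq] add_mono) (auto simp: abs_mult intro: mult_left_mono)
    moreover have "\<bar>Wpost (j, i)\<bar> \<le> r"
      using Wpost that unfolding entries_bounded_def by auto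
    ultimately have "\<bar>Wpost (j, i) * ?u\<bar> \<le> r * ?B"
      unfolding abs_mult by (intro mult_mono) (auto simp: r)
    also have "r * ?B = (\<bar>X a i\<bar> * (K * S b) + \<bar>X b i\<bar> * (K * S a)) * r ^ 2"
      by (simp add: power2_eq_square algebra_simps)
    finally show ?thesis .
  qed
  have "\<bar>\<Sum>i<n. \<Sum>j<n. Wpost (j, i) * (X a i * sigma_s cp cm n (\<Sum>k<n. X b k * Wpre (k, j))
          + X b i * sigma_s cp cm n (\<Sum>k<n. X a k * Wpre (k, j)))\<bar>
        \<le> (\<Sum>i<n. \<Sum>j<n. \<bar>X a i\<bar> * (K * S b) + \<bar>X b i\<bar> * (K * S a)) * r ^ 2"
    unfolding sum_distrib_right real_norm_def[symmetric] by (intro sum_norm_le) (simp add: term_bound)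
  then show "\<bar>T1 cp cm n X a b Wpre Wpost\<bar>
      \<le> (\<bar>\<kappa>\<bar> * (\<Sum>i<n. \<Sum>j<n. \<bar>X a i\<bar> * (K * S b) + \<bar>X b i\<bar> * (K * S a))) * r ^ 2"
    unfolding T1_def Let_def \<kappa>_def abs_mult mult.assoc by (intro mult_left_mono) auto
qed

lemma T2_entrywise_bound:
  obtains C where "\<And>Wpre Wpost r. 0 \<le> r \<Longrightarrow>
      entries_bounded n r Wpre \<Longrightarrow> entries_bounded n r Wpost \<Longrightarrow>
      \<bar>T2 cp cm n X d w Wpre Wpost\<bar> \<le> C * r ^ 4"
proof
  define K where "K = \<bar>s_plus cp n\<bar> + \<bar>s_minus cm n\<bar>"
  define S where "S c = (\<Sum>k<n. \<bar>X c k\<bar>)" for c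
  define \<kappa> where "\<kappa> = (c_const cp cm n)\<^sup>2 / ((real n)\<^sup>2 * sqrt (real n))"
  fix Wpre Wpost and r :: real
  assume r: "0 \<le> r" and Wpre: "entries_bounded n r Wpre" and Wpost: "entries_bounded n r Wpost"
  have term_bound: "\<bar>Wpost (j, i) * Wpost (j', i) * sigma_s cp cm n (\<Sum>k<n. X d k * Wpre (k, j))
          * sigma_s cp cm n (\<Sum>k<n. X w k * Wpre (k, j'))\<bar>
        \<le> (K * S d) * (K * S w) * r ^ 4"
    if "i < n" "j < n" "j' < n" for i j j'
  proof -
    have \<sigma>: "\<bar>sigma_s cp cm n (\<Sum>k<n. X c k * Wpre (k, l))\<bar> \<le> K * S c * r" if "l < n" for c l
      using Wpre that unfolding K_def S_def entries_bounded_def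
      by (intro abs_sigma_s_sum_mult_le) auto
    have "\<bar>Wpost (j, i)\<bar> \<le> r" "\<bar>Wpost (j', i)\<bar> \<le> r"
      using Wpost that unfolding entries_bounded_def by auto
    moreover have "0 \<le> K" "0 \<le> S c" for c
      unfolding K_def S_def by (auto intro: sum_nonneg)
    ultimately have "\<bar>Wpost (j, i) * Wpost (j', i) * sigma_s cp cm n (\<Sum>k<n. X d k * Wpre (k, j))
          * sigma_s cp cm n (\<Sum>k<n. X w k * Wpre (k, j'))\<bar> \<le> r * r * (K * S d * r) * (K * S w * r)"
      unfolding abs_mult using \<sigma> that r by (intro mult_mono) (auto intro: mult_nonneg_nonneg)
    also have "\<dots> = (K * S d) * (K * S w) * r ^ 4"
      by (simp add: power4_eq_xxxx algebra_simps)
    finally show ?thesis .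
  qed
  have "\<bar>\<Sum>i<n. \<Sum>j<n. \<Sum>j'<n. Wpost (j, i) * Wpost (j', i) * sigma_s cp cm n (\<Sum>k<n. X d k * Wpre (k, j))
          * sigma_s cp cm n (\<Sum>k<n. X w k * Wpre (k, j'))\<bar>
        \<le> (\<Sum>i<n. \<Sum>j<n. \<Sum>j'<n. (K * S d) * (K * S w)) * r ^ 4"
    unfolding sum_distrib_right real_norm_def[symmetric] by (intro sum_norm_le) (simp add: term_bound)
  then show "\<bar>T2 cp cm n X d w Wpre Wpost\<bar>
      \<le> (\<bar>\<kappa>\<bar> * (\<Sum>i<n. \<Sum>j<n. \<Sum>j'<n. (K * S d) * (K * S w))) * r ^ 4"
    unfolding T2_def Let_def \<kappa>_def abs_mult mult.assoc by (intro mult_left_mono) auto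
qed

lemma T1_mult_T2_entrywise_bound:
  obtains C where "\<And>Wpre Wpost r. 0 \<le> r \<Longrightarrow>
      entries_bounded n r Wpre \<Longrightarrow> entries_bounded n r Wpost \<Longrightarrow>
      \<bar>T1 cp cm n X a b Wpre Wpost * T2 cp cm n X d w Wpre Wpost\<bar> \<le> C * r ^ 6"
proof -
  obtain C1 C2 where
    T1_bound: "\<And>Wpre Wpost r. 0 \<le> r \<Longrightarrow> entries_bounded n r Wpre \<Longrightarrow> entries_bounded n r Wpost \<Longrightarrow>
      \<bar>T1 cp cm n X a b Wpre Wpost\<bar> \<le> C1 * r ^ 2" and
    T2_bound: "\<And>Wpre Wpost r. 0 \<le> r \<Longrightarrow> entries_bounded n r Wpre \<Longrightarrow> entries_bounded n r Wpost \<Longrightarrow>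
      \<bar>T2 cp cm n X d w Wpre Wpost\<bar> \<le> C2 * r ^ 4"
    using T1_entrywise_bound T2_entrywise_bound by metis
  have "\<bar>T1 cp cm n X a b Wpre Wpost * T2 cp cm n X d w Wpre Wpost\<bar> \<le> (C1 * C2) * r ^ 6"
    if "0 \<le> r" "entries_bounded n r Wpre" "entries_bounded n r Wpost" for Wpre Wpost r
  proof -
    have "\<bar>T1 cp cm n X a b Wpre Wpost\<bar> * \<bar>T2 cp cm n X d w Wpre Wpost\<bar> \<le> (C1 * r ^ 2) * (C2 * r ^ 4)"
      using T1_bound[OF that] T2_bound[OF that] by (intro mult_mono) auto
    then show ?thesis
      by (simp add: abs_mult algebra_simps flip: power_add)
  qed
  then show ?thesis
    using that by blast
qed

lemma integrable_weights_if_entrywise_bound: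
  assumes "0 < k" and F_measurable: "F \<in> borel_measurable (weights n)"
    and F_bound: "\<And>Wpre Wpost r. 0 \<le> r \<Longrightarrow>
      entries_bounded n r Wpre \<Longrightarrow> entries_bounded n r Wpost \<Longrightarrow>
      \<bar>F (Wpre, Wpost)\<bar> \<le> C * r ^ k"
  shows "integrable (weights n) F"
proof (rule Bochner_Integration.integrable_bound[OF _ F_measurable])
  define Q :: "(nat \<times> nat \<Rightarrow> real) \<times> (nat \<times> nat \<Rightarrow> real) \<Rightarrow> real"
    where "Q W = (\<Sum>e\<in>{..<n} \<times> {..<n}. \<bar>fst W e\<bar> ^ k + \<bar>snd W e\<bar> ^ k)" for W
  show "integrable (weights n) (\<lambda>W. C * Q W)"
    unfolding Q_def weights_def
    by (intro integrable_mult_right Bochner_Integration.integrable_sum Bochner_Integration.integrable_add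
        integrable_pair_measure_fst integrable_pair_measure_snd prob_space_gauss_mat)
      (auto simp: gauss_mat_def intro: integrable_PiM_component prob_space_std_gauss integrable_std_gauss_abs_power)
  have "\<bar>F W\<bar> \<le> C * Q W" for W
  proof -
    obtain Wpre Wpost where W: "W = (Wpre, Wpost)" by fastforce
    have "0 \<le> Q W"
      unfolding Q_def by (auto intro: sum_nonneg)
    define r where "r = root k (Q W)"
    have "0 \<le> r" and r_power: "r ^ k = Q W"
      unfolding r_def using \<open>0 \<le> Q W\<close> \<open>0 < k\<close> by auto
    have "\<bar>Wpre e\<bar> \<le> r \<and> \<bar>Wpost e\<bar> \<le> r" if "e \<in> {..<n} \<times> {..<n}" for e
    proof -
      have "\<bar>Wpre e\<bar> ^ k + \<bar>Wpost e\<bar> ^ k \<le> r ^ k"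
        unfolding r_power Q_def W fst_conv snd_conv using that by (intro member_le_sum) auto
      then have "\<bar>Wpre e\<bar> ^ k \<le> r ^ k \<and> \<bar>Wpost e\<bar> ^ k \<le> r ^ k"
        using zero_le_power_abs[of "Wpre e" k] zero_le_power_abs[of "Wpost e" k] by linarith
      then show ?thesis
        using \<open>0 \<le> r\<close> \<open>0 < k\<close> by simp
    qed
    then have "entries_bounded n r Wpre" "entries_bounded n r Wpost"
      unfolding entries_bounded_def by auto
    then show ?thesis
      using F_bound \<open>0 \<le> r\<close> r_power W by metis
  qed
  then have "norm (F W) \<le> norm (C * Q W)" for W
    unfolding real_norm_def by (rule order_trans[OF _ abs_ge_self])
  then show "AE W in weights n. norm (F W) \<le> norm (C * Q W)"
    by simp
qed

theorem lemmaB3: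
  fixes cp cm :: real and m n :: nat and X :: "nat \<Rightarrow> nat \<Rightarrow> real"
    and a b d w :: nat
  assumes "a < m" "b < m" "d < m" "w < m"
  shows "integrable (weights n)
           (\<lambda>(Wpre, Wpost). T1 cp cm n X a b Wpre Wpost * T2 cp cm n X d w Wpre Wpost)
       \<and> (\<integral>W. (case W of (Wpre, Wpost) \<Rightarrow>
              T1 cp cm n X a b Wpre Wpost * T2 cp cm n X d w Wpre Wpost) \<partial>weights n) = 0"
proof -
  \<comment> \<open>The bounds on the token indices are not needed: the identity holds for any rows of \<open>X\<close>.\<close>
  define F where "F = (\<lambda>(Wpre, Wpost). T1 cp cm n X a b Wpre Wpost * T2 cp cm n X d w Wpre Wpost)"
  have F_measurable: "F \<in> borel_measurable (weights n)"
    unfolding F_def weights_def gauss_mat_def T1_def T2_def sigma_s_def Let_def by measurable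
  obtain C where "\<And>Wpre Wpost r. 0 \<le> r \<Longrightarrow>
      entries_bounded n r Wpre \<Longrightarrow> entries_bounded n r Wpost \<Longrightarrow> \<bar>F (Wpre, Wpost)\<bar> \<le> C * r ^ 6"
    using T1_mult_T2_entrywise_bound unfolding F_def prod.case by blast
  then have "integrable (weights n) F"
    by (intro integrable_weights_if_entrywise_bound[where k = 6, OF _ F_measurable]) auto
  moreover have "integral\<^sup>L (weights n) F = 0"
    using negate_post_measurable distr_weights_negate_post F_measurable
    by (rule integral_eq_0_if_odd) (auto simp: F_def negate_post_def T1_negate_post T2_negate_post)
  ultimately show ?thesis
    unfolding F_def by simp
qed

end
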